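(* Let $\mathcal{A}\subset\mathbb{C}^n$ be a centrosymmetric set of atoms whose convex hull is compact and contains a ball of positive radius around the origin. Let $x^\star\in\mathbb{C}^n$, let $w$ be a random vector in $\mathbb{C}^n$ with $\mathbb{E}\|w\|_{\mathcal{A}}^*<\infty$, and suppose there is a function $\delta$ such that $P(\|w\|_{\mathcal{A}}^*\ge\mathbb{E}\|w\|_{\mathcal{A}}^*+t)<\delta(t)$ for all $t>0$. Let $\tau>0$, $y=x^\star+w$, and let $\hat{x}$ be the solution of $$\operatorname*{minimize}_{x\in\mathbb{C}^n}\ \tfrac{1}{2}\|x-y\|_2^2+\tau\|x\|_{\mathcal{A}}.$$ For $\gamma\in[0,1]$ define the cone $$C_\gamma(x^\star,\mathcal{A})=\operatorname{cone}\left(\{z:\|x^\star+z\|_{\mathcal{A}}\le\|x^\star\|_{\mathcal{A}}+\gamma\|z\|_{\mathcal{A}}\}\right)$$ and $$\phi_\gamma(x^\star,\mathcal{A})=\inf\left\{\frac{\|z\|_2}{\|z\|_{\mathcal{A}}}: z\in C_\gamma(x^\star,\mathcal{A})\right\}.$$ Suppose $\phi_\gamma(x^\star,\mathcal{A})>0$ for some $\gamma\in[0,1]$ with $\gamma>\mathbb{E}\|w\|_{\mathcal{A}}^*/\tau$. Then $$\|\hat{x}-x^\star\|_2^2\le\frac{(1+\gamma)^2\tau^2}{\gamma^2\,\phi_\gamma(x^\star,\mathcal{A})^2}$$ with probability at least $1-\delta(\gamma\tau-\mathbb{E}\|w\|_{\mathcal{A}}^* )$.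
   Context: The atomic norm is the gauge $\|x\|_{\mathcal{A}}=\inf\{t>0: x\in t\,\operatorname{conv}(\mathcal{A})\}$. The real inner product on $\mathbb{C}^n$ is $\langle x,z\rangle=\operatorname{Re}(z^*x)$. The dual atomic norm is $\|z\|_{\mathcal{A}}^*=\sup_{a\in\mathcal{A}}\langle z,a\rangle$. $\operatorname{cone}(X)$ denotes the conic hull $\{\lambda x:\lambda\ge0,x\in X\}$; in the infimum defining $\phi_\gamma$, $z$ ranges over nonzero elements. *)

theory Defs
  imports "HOL-Analysis.Analysis" "HOL-Probability.Probability"
begin

text \<open>Vectors in C^n are modelled as complex ^ 'n. The real inner product
  inner x z on this type equals Re (z^* x), and norm is the Euclidean 2-norm.\<close>

definition atomic_norm :: "('a::real_vector) set \<Rightarrow> 'a \<Rightarrow> real" where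
  "atomic_norm A x = Inf {t. t > 0 \<and> x \<in> (\<lambda>v. t *\<^sub>R v) ` (convex hull A)}"

definition dual_atomic_norm :: "('a::real_inner) set \<Rightarrow> 'a \<Rightarrow> real" where
  "dual_atomic_norm A z = (SUP a\<in>A. inner z a)"

definition centrosymmetric :: "('a::real_vector) set \<Rightarrow> bool" where
  "centrosymmetric A \<longleftrightarrow> (\<forall>a\<in>A. - a \<in> A)"

definition conic_hull :: "('a::real_vector) set \<Rightarrow> 'a set" where
  "conic_hull X = {c *\<^sub>R x | c x. c \<ge> 0 \<and> x \<in> X}"

definition descent_cone :: "real \<Rightarrow> ('a::real_vector) \<Rightarrow> 'a set \<Rightarrow> 'a set" where
  "descent_cone \<gamma> xs A =
     conic_hull {z. atomic_norm A (xs + z) \<le> atomic_norm A xs + \<gamma> * atomic_norm A z}"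

definition phi :: "real \<Rightarrow> ('a::real_normed_vector) \<Rightarrow> 'a set \<Rightarrow> real" where
  "phi \<gamma> xs A = Inf {norm z / atomic_norm A z | z. z \<in> descent_cone \<gamma> xs A \<and> z \<noteq> 0}"

end

theory Submission imports Defs begin

text \<open>Let \<open>e\<close> be the error of the estimator. Testing the optimality of the proximal problem
  against \<open>x\<^sup>\<star>\<close> and bounding \<open>\<langle>w, e\<rangle> \<le> \<parallel>w\<parallel>\<^sup>* \<parallel>e\<parallel>\<^sub>\<A>\<close> gives
  \<open>\<parallel>e\<parallel>\<^sub>2\<^sup>2 + \<tau>\<parallel>x\<^sup>\<star> + e\<parallel>\<^sub>\<A> \<le> \<tau>\<parallel>x\<^sup>\<star>\<parallel>\<^sub>\<A> + \<parallel>w\<parallel>\<^sup>* \<parallel>e\<parallel>\<^sub>\<A>\<close>. On the event \<open>\<parallel>w\<parallel>\<^sup>* < \<gamma>\<tau>\<close>, whose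
  probability the tail bound controls, this puts \<open>e\<close> into the cone \<open>C\<^sub>\<gamma>\<close> and, with the
  triangle inequality, gives \<open>\<parallel>e\<parallel>\<^sub>2\<^sup>2 \<le> (1+\<gamma>)\<tau>\<parallel>e\<parallel>\<^sub>\<A>\<close>; inside the cone
  \<open>\<phi>\<^sub>\<gamma>\<parallel>e\<parallel>\<^sub>\<A> \<le> \<parallel>e\<parallel>\<^sub>2\<close>, hence \<open>\<parallel>e\<parallel>\<^sub>2 \<le> (1+\<gamma>)\<tau>/\<phi>\<^sub>\<gamma>\<close>. The estimator is a measurable
  function of the noise because the proximal map is nonexpansive.\<close>

lemma le_of_le_add_mult_small:
  fixes a b c :: real
  assumes "\<And>t. 0 < t \<Longrightarrow> t < 1 \<Longrightarrow> a \<le> b + t * c" and "0 \<le> c"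
  shows "a \<le> b"
proof (rule field_le_epsilon)
  fix e :: real assume e: "e > 0"
  define t where "t = min (1/2) (e / (c + 1))"
  have t: "0 < t" "t < 1" using e assms(2) by (auto simp: t_def)
  have "t * c \<le> e / (c + 1) * c" using assms(2) by (intro mult_right_mono) (auto simp: t_def)
  also have "\<dots> \<le> e" using e assms(2) by (simp add: field_simps)
  finally show "a \<le> b + e" using assms(1)[OF t] by linarith
qed

lemma square_le_of_quadratic_bound:
  fixes n g c \<phi> :: real
  assumes quad: "n\<^sup>2 \<le> c * g" and lin: "\<phi> * g \<le> n"
    and "0 < \<phi>" "0 \<le> c" "0 \<le> n"
  shows "n\<^sup>2 \<le> (c / \<phi>)\<^sup>2"
proof (cases "n = 0")
  case False
  have "\<phi> * (n * n) \<le> c * (\<phi> * g)" using quad \<open>0 < \<phi>\<close> by (simp add: power2_eq_square)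
  also have "\<dots> \<le> c * n" using lin \<open>0 \<le> c\<close> by (rule mult_left_mono)
  finally have "\<phi> * n \<le> c" using False \<open>0 \<le> n\<close> by (simp add: mult.assoc[symmetric])
  then have "n \<le> c / \<phi>" using \<open>0 < \<phi>\<close> by (simp add: field_simps)
  then show ?thesis using \<open>0 \<le> n\<close> by (rule power_mono)
qed simp

lemma (in prob_space) prob_ge_one_minus_prob:
  assumes "B \<in> events" "E \<in> events" "space M - B \<subseteq> E"
  shows "1 - prob B \<le> prob E"
  using prob_compl[OF assms(1)] finite_measure_mono[OF assms(3,2)] by simp

lemma mem_descent_cone:
  "atomic_norm A (xs + z) \<le> atomic_norm A xs + \<gamma> * atomic_norm A z \<Longrightarrow> z \<in> descent_cone \<gamma> xs A"
  unfolding descent_cone_def conic_hull_def by (auto intro!: exI[where x=1])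

lemma bdd_above_inner_image: "bounded A \<Longrightarrow> bdd_above ((\<lambda>a. inner w a) ` A)"
  by (intro bounded_imp_bdd_above bounded_linear_image bounded_linear_inner_right)

subsection \<open>Proximal points\<close>

definition is_prox :: "('a::real_normed_vector \<Rightarrow> real) \<Rightarrow> 'a \<Rightarrow> 'a \<Rightarrow> bool" where
  "is_prox f y p \<longleftrightarrow> (\<forall>x. (1/2) * (norm (p - y))\<^sup>2 + f p \<le> (1/2) * (norm (x - y))\<^sup>2 + f x)"

definition prox :: "('a::real_normed_vector \<Rightarrow> real) \<Rightarrow> 'a \<Rightarrow> 'a" where
  "prox f y = (SOME p. is_prox f y p)"

lemma is_prox_variational_ineq:
  fixes f :: "'a::real_inner \<Rightarrow> real"
  assumes f: "convex_on UNIV f" and p: "is_prox f y p"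
  shows "inner (y - p) (x - p) \<le> f x - f p"
proof (rule le_of_le_add_mult_small[where c="(norm (x - p))\<^sup>2 / 2"])
  fix t :: real assume t: "0 < t" "t < 1"
  define q where "q = (1 - t) *\<^sub>R p + t *\<^sub>R x"
  have qy: "q - y = (p - y) + t *\<^sub>R (x - p)" by (simp add: q_def algebra_simps)
  have q_dist: "(norm (q - y))\<^sup>2 = (norm (p - y))\<^sup>2 + 2 * t * inner (p - y) (x - p) + t\<^sup>2 * (norm (x - p))\<^sup>2"
    unfolding qy power2_norm_eq_inner
    by (simp add: inner_add_left inner_add_right inner_commute power2_eq_square algebra_simps)
  have fq: "f q \<le> (1 - t) * f p + t * f x"
    unfolding q_def using f t by (intro convex_onD) auto
  have "(1/2) * (norm (p - y))\<^sup>2 + f p \<le> (1/2) * (norm (q - y))\<^sup>2 + f q"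
    using p unfolding is_prox_def by blast
  then have "0 \<le> t * (inner (p - y) (x - p) + t * ((norm (x - p))\<^sup>2 / 2) + (f x - f p))"
    using q_dist fq by (simp add: algebra_simps power2_eq_square)
  then have "0 \<le> inner (p - y) (x - p) + t * ((norm (x - p))\<^sup>2 / 2) + (f x - f p)"
    using t by (simp add: zero_le_mult_iff)
  then show "inner (y - p) (x - p) \<le> f x - f p + t * ((norm (x - p))\<^sup>2 / 2)"
    by (simp add: inner_diff_left)
qed simp

lemma is_prox_nonexpansive:
  fixes f :: "'a::real_inner \<Rightarrow> real"
  assumes f: "convex_on UNIV f" and p1: "is_prox f y1 p1" and p2: "is_prox f y2 p2"
  shows "norm (p1 - p2) \<le> norm (y1 - y2)"
proof -
  have "inner (y1 - p1) (p2 - p1) + inner (y2 - p2) (p1 - p2) \<le> 0"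
    using is_prox_variational_ineq[OF f p1, of p2] is_prox_variational_ineq[OF f p2, of p1] by simp
  moreover have "inner (y1 - p1) (p2 - p1) + inner (y2 - p2) (p1 - p2)
      = (norm (p1 - p2))\<^sup>2 - inner (y1 - y2) (p1 - p2)"
    unfolding power2_norm_eq_inner by (simp add: inner_diff_left inner_diff_right inner_commute algebra_simps)
  ultimately have "(norm (p1 - p2))\<^sup>2 \<le> inner (y1 - y2) (p1 - p2)" by simp
  also have "\<dots> \<le> norm (y1 - y2) * norm (p1 - p2)" by (rule norm_cauchy_schwarz)
  finally show ?thesis by (cases "p1 = p2") (auto simp: power2_eq_square)
qed

lemma is_prox_exists:
  fixes f :: "'a::euclidean_space \<Rightarrow> real"
  assumes cont: "continuous_on UNIV f" and nonneg: "\<And>x. f x \<ge> 0"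
  shows "\<exists>p. is_prox f y p"
proof -
  define F where "F x = (1/2) * (norm (x - y))\<^sup>2 + f x" for x
  define R where "R = 2 * f y + 1"
  have R: "R \<ge> 0" using nonneg[of y] by (simp add: R_def)
  have "continuous_on (cball y R) F"
    unfolding F_def by (intro continuous_intros continuous_on_subset[OF cont]) auto
  then obtain p where p: "p \<in> cball y R" "\<And>z. z \<in> cball y R \<Longrightarrow> F p \<le> F z"
    using continuous_attains_inf[OF compact_cball] R by (metis cball_eq_empty not_less)
  have "F p \<le> F x" for x
  proof (cases "x \<in> cball y R")
    case False
    \<comment> \<open>outside the ball the quadratic term alone exceeds \<open>F y = f y\<close>\<close>
    then have "R < norm (x - y)" by (simp add: dist_norm norm_minus_commute)
    then have "R\<^sup>2 < (norm (x - y))\<^sup>2" using R by (intro power_strict_mono) auto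
    moreover have "2 * f y \<le> R\<^sup>2"
      using nonneg[of y] by (simp add: R_def power2_eq_square algebra_simps)
    moreover have "F p \<le> F y" using p R by auto
    ultimately show ?thesis using nonneg[of x] by (simp add: F_def)
  qed (use p in auto)
  then show ?thesis unfolding is_prox_def F_def by blast
qed

context
  fixes f :: "'a::euclidean_space \<Rightarrow> real"
  assumes convex: "convex_on UNIV f" and cont: "continuous_on UNIV f" and nonneg: "\<And>x. f x \<ge> 0"
begin

lemma is_prox_prox: "is_prox f y (prox f y)"
  unfolding prox_def using is_prox_exists[OF cont nonneg] by (rule someI_ex)

lemma is_prox_imp_eq_prox: "is_prox f y p \<Longrightarrow> p = prox f y"
  using is_prox_nonexpansive[OF convex _ is_prox_prox, of y p y] by simp

lemma continuous_on_prox: "continuous_on UNIV (prox f)"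
  by (rule lipschitz_on_continuous_on[of 1], rule lipschitz_onI)
     (use is_prox_nonexpansive[OF convex is_prox_prox is_prox_prox] in \<open>auto simp: dist_norm\<close>)

end

subsection \<open>The atomic norm of an absorbing set of atoms\<close>

locale absorbing_atoms =
  fixes A :: "'a::euclidean_space set"
  assumes zero_interior: "0 \<in> interior (convex hull A)"
begin

lemma zero_in_convex_hull: "0 \<in> convex hull A"
  using zero_interior interior_subset by blast

lemma mem_scaled_hull_iff:
  "t > 0 \<Longrightarrow> x \<in> (\<lambda>v. t *\<^sub>R v) ` (convex hull A) \<longleftrightarrow> inverse t *\<^sub>R x \<in> convex hull A"
  by (auto intro!: image_eqI[where x="inverse t *\<^sub>R x"])

lemma mem_scaled_hull_mono:
  assumes "0 < t" "t \<le> s" "x \<in> (\<lambda>v. t *\<^sub>R v) ` (convex hull A)"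
  shows "x \<in> (\<lambda>v. s *\<^sub>R v) ` (convex hull A)"
proof -
  have "inverse t *\<^sub>R x \<in> convex hull A" using assms mem_scaled_hull_iff by blast
  then have "(1 - t/s) *\<^sub>R 0 + (t/s) *\<^sub>R (inverse t *\<^sub>R x) \<in> convex hull A"
    using assms by (intro convexD_alt[OF convex_convex_hull zero_in_convex_hull]) auto
  moreover have "(1 - t/s) *\<^sub>R 0 + (t/s) *\<^sub>R (inverse t *\<^sub>R x) = inverse s *\<^sub>R x"
    using assms by (simp add: field_simps)
  ultimately have "inverse s *\<^sub>R x \<in> convex hull A" by metis
  then show ?thesis using assms mem_scaled_hull_iff[of s] by simp
qed

lemma mem_scaled_hull_of_norm_less:
  assumes "r > 0" "ball 0 r \<subseteq> convex hull A" "t > 0" "norm x < t * r"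
  shows "x \<in> (\<lambda>v. t *\<^sub>R v) ` (convex hull A)"
proof -
  have "norm (inverse t *\<^sub>R x) < r" using assms by (simp add: field_simps)
  then show ?thesis using assms mem_scaled_hull_iff by auto
qed

lemma scaled_hull_ne: "{t. t > 0 \<and> x \<in> (\<lambda>v. t *\<^sub>R v) ` (convex hull A)} \<noteq> {}"
proof -
  obtain r where "r > 0" "ball 0 r \<subseteq> convex hull A" using zero_interior mem_interior by blast
  moreover have "norm x < (norm x / r + 1) * r" using \<open>r > 0\<close> by (simp add: field_simps)
  ultimately show ?thesis using mem_scaled_hull_of_norm_less[of r "norm x / r + 1"]
    by (metis (mono_tags, lifting) add_nonneg_pos divide_nonneg_pos empty_iff mem_Collect_eq
        norm_ge_zero zero_less_one)
qed

lemma atomic_norm_nonneg: "atomic_norm A x \<ge> 0"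
  unfolding atomic_norm_def using scaled_hull_ne by (intro cInf_greatest) auto

lemma atomic_norm_le: "t > 0 \<Longrightarrow> x \<in> (\<lambda>v. t *\<^sub>R v) ` (convex hull A) \<Longrightarrow> atomic_norm A x \<le> t"
  unfolding atomic_norm_def by (rule cInf_lower) (auto intro: bdd_belowI[where m=0])

lemma mem_scaled_hull_of_atomic_norm_less:
  assumes "atomic_norm A x < t"
  shows "t > 0" "x \<in> (\<lambda>v. t *\<^sub>R v) ` (convex hull A)"
proof -
  obtain s where "s > 0" "x \<in> (\<lambda>v. s *\<^sub>R v) ` (convex hull A)" "s < t"
    using assms scaled_hull_ne unfolding atomic_norm_def
    by (subst (asm) cInf_less_iff) (auto intro: bdd_belowI[where m=0])
  then show "t > 0" "x \<in> (\<lambda>v. t *\<^sub>R v) ` (convex hull A)" using mem_scaled_hull_mono by auto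
qed

lemma atomic_norm_le_norm_div:
  assumes "r > 0" "ball 0 r \<subseteq> convex hull A"
  shows "atomic_norm A x \<le> norm x / r"
proof (rule field_le_epsilon)
  fix e :: real assume "e > 0"
  then have "norm x < (norm x / r + e) * r" "norm x / r + e > 0"
    using assms(1) by (auto simp: field_simps add_nonneg_pos)
  then show "atomic_norm A x \<le> norm x / r + e"
    using atomic_norm_le mem_scaled_hull_of_norm_less[OF assms] by blast
qed

lemma atomic_norm_zero [simp]: "atomic_norm A 0 = 0"
proof -
  obtain r where "r > 0" "ball 0 r \<subseteq> convex hull A" using zero_interior mem_interior by blast
  then show ?thesis using atomic_norm_le_norm_div[of r 0] atomic_norm_nonneg[of 0] by simp
qed

lemma atomic_norm_triangle: "atomic_norm A (x + y) \<le> atomic_norm A x + atomic_norm A y"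
proof (rule field_le_epsilon)
  fix e :: real assume e: "e > 0"
  define t s where "t = atomic_norm A x + e/2" and "s = atomic_norm A y + e/2"
  have "atomic_norm A x < t" "atomic_norm A y < s" using e by (auto simp: t_def s_def)
  then obtain u v where uv: "u \<in> convex hull A" "x = t *\<^sub>R u" "v \<in> convex hull A" "y = s *\<^sub>R v"
    and ts: "t > 0" "s > 0" using mem_scaled_hull_of_atomic_norm_less by blast
  \<comment> \<open>\<open>x + y\<close> is \<open>t + s\<close> times a convex combination of \<open>u\<close> and \<open>v\<close>\<close>
  have "(1 - s/(t+s)) *\<^sub>R u + (s/(t+s)) *\<^sub>R v \<in> convex hull A"
    using ts by (intro convexD_alt[OF convex_convex_hull uv(1,3)]) auto
  moreover have "(1 - s/(t+s)) *\<^sub>R u + (s/(t+s)) *\<^sub>R v = inverse (t+s) *\<^sub>R (x + y)"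
    using ts uv by (simp add: field_simps scaleR_add_right)
  ultimately have "atomic_norm A (x + y) \<le> t + s"
    using ts mem_scaled_hull_iff[of "t+s"] atomic_norm_le[of "t+s"] by simp
  then show "atomic_norm A (x + y) \<le> atomic_norm A x + atomic_norm A y + e"
    by (simp add: t_def s_def)
qed

lemma atomic_norm_scaleR_le:
  assumes c: "c > 0"
  shows "atomic_norm A (c *\<^sub>R x) \<le> c * atomic_norm A x"
proof (rule field_le_epsilon)
  fix e :: real assume e: "e > 0"
  define t where "t = atomic_norm A x + e/c"
  have "atomic_norm A x < t" using e c by (simp add: t_def)
  then obtain u where "u \<in> convex hull A" "x = t *\<^sub>R u" "t > 0"
    using mem_scaled_hull_of_atomic_norm_less by blast
  then have "atomic_norm A (c *\<^sub>R x) \<le> c * t" using c by (intro atomic_norm_le) auto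
  also have "c * t = c * atomic_norm A x + e" using c by (simp add: t_def field_simps)
  finally show "atomic_norm A (c *\<^sub>R x) \<le> c * atomic_norm A x + e" .
qed

lemma atomic_norm_scaleR: "c \<ge> 0 \<Longrightarrow> atomic_norm A (c *\<^sub>R x) = c * atomic_norm A x"
  using atomic_norm_scaleR_le[of c x] atomic_norm_scaleR_le[of "inverse c" "c *\<^sub>R x"]
  by (cases "c = 0") (auto simp: field_simps)

lemma convex_on_atomic_norm: "convex_on UNIV (atomic_norm A)"
proof (rule convex_onI)
  fix t :: real and x y :: 'a assume "0 < t" "t < 1"
  then show "atomic_norm A ((1 - t) *\<^sub>R x + t *\<^sub>R y) \<le> (1 - t) * atomic_norm A x + t * atomic_norm A y"
    using atomic_norm_triangle[of "(1 - t) *\<^sub>R x" "t *\<^sub>R y"] by (simp add: atomic_norm_scaleR)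
qed simp

lemma atomic_norm_minus:
  assumes "centrosymmetric A"
  shows "atomic_norm A (- x) = atomic_norm A x"
proof -
  have "uminus ` A = A"
    using assms unfolding centrosymmetric_def by (auto intro!: image_eqI[where x="- _"])
  then have hull: "uminus ` (convex hull A) = convex hull A"
    using convex_hull_linear_image[OF linear_uminus, of A] by simp
  have "(\<lambda>v. t *\<^sub>R v) ` (convex hull A) = uminus ` (\<lambda>v. t *\<^sub>R v) ` (convex hull A)" for t
    by (subst (2) hull[symmetric]) (auto simp: image_image)
  then have "x \<in> (\<lambda>v. t *\<^sub>R v) ` (convex hull A) \<longleftrightarrow> - x \<in> (\<lambda>v. t *\<^sub>R v) ` (convex hull A)" for t
    by (metis (no_types, lifting) image_iff minus_minus)
  then show ?thesis unfolding atomic_norm_def by simp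
qed

lemma continuous_on_atomic_norm: "continuous_on S (atomic_norm A)"
proof -
  obtain r where r: "r > 0" "ball 0 r \<subseteq> convex hull A" using zero_interior mem_interior by blast
  have "dist (atomic_norm A x) (atomic_norm A y) \<le> (1/r) * dist x y" for x y
    using atomic_norm_triangle[of y "x - y"] atomic_norm_triangle[of x "y - x"]
      atomic_norm_le_norm_div[OF r, of "x - y"] atomic_norm_le_norm_div[OF r, of "y - x"]
    by (simp add: dist_real_def dist_norm abs_le_iff norm_minus_commute)
  then show ?thesis
    by (intro lipschitz_on_continuous_on[of "1/r"] lipschitz_onI) (use r in auto)
qed

lemma dual_atomic_norm_nonneg:
  assumes "bounded A" "centrosymmetric A"
  shows "dual_atomic_norm A w \<ge> 0"
proof -
  obtain a where a: "a \<in> A" using zero_in_convex_hull by fastforce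
  moreover have "- a \<in> A" using a assms(2) unfolding centrosymmetric_def by auto
  ultimately have "inner w a \<le> dual_atomic_norm A w" "inner w (- a) \<le> dual_atomic_norm A w"
    unfolding dual_atomic_norm_def using bdd_above_inner_image[OF assms(1)] by (metis cSUP_upper)+
  then show ?thesis by simp
qed

lemma inner_le_atomic_norm_mult_dual:
  assumes "bounded A" "centrosymmetric A"
  shows "inner w x \<le> atomic_norm A x * dual_atomic_norm A w"
proof (rule field_le_epsilon)
  define D where "D = dual_atomic_norm A w"
  have D: "D \<ge> 0" unfolding D_def by (rule dual_atomic_norm_nonneg[OF assms])
  have "A \<subseteq> {v. inner w v \<le> D}"
    unfolding D_def dual_atomic_norm_def using bdd_above_inner_image[OF assms(1)]
    by (auto intro: cSUP_upper)
  then have hull: "convex hull A \<subseteq> {v. inner w v \<le> D}"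
    by (intro hull_minimal convex_halfspace_le)
  fix e :: real assume e: "e > 0"
  define t where "t = atomic_norm A x + e / (D + 1)"
  have "atomic_norm A x < t" using e D by (simp add: t_def)
  then obtain u where u: "u \<in> convex hull A" "x = t *\<^sub>R u" "t > 0"
    using mem_scaled_hull_of_atomic_norm_less by blast
  have "inner w x \<le> t * D" using hull u by (auto intro: mult_left_mono)
  also have "\<dots> = atomic_norm A x * D + e * (D / (D + 1))" using D by (simp add: t_def field_simps)
  also have "\<dots> \<le> atomic_norm A x * D + e * 1" using D e by (intro add_left_mono mult_left_mono) auto
  finally show "inner w x \<le> atomic_norm A x * D + e" by simp
qed

lemma phi_mult_atomic_norm_le:
  assumes "z \<in> descent_cone \<gamma> xs A"
  shows "phi \<gamma> xs A * atomic_norm A z \<le> norm z"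
proof (cases "z = 0 \<or> atomic_norm A z = 0")
  case False
  then have "phi \<gamma> xs A \<le> norm z / atomic_norm A z"
    unfolding phi_def using assms
    by (intro cInf_lower) (auto intro!: bdd_belowI[where m=0] divide_nonneg_nonneg atomic_norm_nonneg)
  then show ?thesis using False atomic_norm_nonneg[of z] by (simp add: field_simps)
qed auto

subsection \<open>The denoising error\<close>

lemma prox_basic_ineq:
  assumes "bounded A" "centrosymmetric A" "\<tau> > 0"
    and prox: "is_prox (\<lambda>x. \<tau> * atomic_norm A x) (xs + w) xh"
  shows "(norm (xh - xs))\<^sup>2 + \<tau> * atomic_norm A xh
      \<le> \<tau> * atomic_norm A xs + dual_atomic_norm A w * atomic_norm A (xh - xs)"
proof -
  have "convex_on UNIV (\<lambda>x. \<tau> * atomic_norm A x)"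
    using \<open>\<tau> > 0\<close> by (intro convex_on_cmul convex_on_atomic_norm) simp
  from is_prox_variational_ineq[OF this prox, of xs]
  have "inner (xs + w - xh) (xs - xh) \<le> \<tau> * atomic_norm A xs - \<tau> * atomic_norm A xh" .
  moreover have "inner (xs + w - xh) (xs - xh) = (norm (xh - xs))\<^sup>2 - inner w (xh - xs)"
    unfolding power2_norm_eq_inner
    by (simp add: inner_diff_left inner_diff_right inner_commute algebra_simps)
  moreover have "inner w (xh - xs) \<le> dual_atomic_norm A w * atomic_norm A (xh - xs)"
    using inner_le_atomic_norm_mult_dual[OF assms(1,2)] by (metis mult.commute)
  ultimately show ?thesis by linarith
qed

lemma prox_error_bound:
  assumes "bounded A" "centrosymmetric A" "\<tau> > 0"
    and prox: "is_prox (\<lambda>x. \<tau> * atomic_norm A x) (xs + w) xh"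
    and small_noise: "dual_atomic_norm A w \<le> \<gamma> * \<tau>"
    and phi_pos: "phi \<gamma> xs A > 0"
  shows "(norm (xh - xs))\<^sup>2 \<le> ((1 + \<gamma>) * \<tau> / phi \<gamma> xs A)\<^sup>2"
proof -
  define e where "e = xh - xs"
  have "0 \<le> \<gamma> * \<tau>" using small_noise dual_atomic_norm_nonneg[OF assms(1,2), of w] by linarith
  then have "\<gamma> \<ge> 0" using \<open>\<tau> > 0\<close> by (simp add: zero_le_mult_iff)
  have "dual_atomic_norm A w * atomic_norm A e \<le> \<gamma> * \<tau> * atomic_norm A e"
    using small_noise atomic_norm_nonneg by (rule mult_right_mono)
  then have basic: "(norm e)\<^sup>2 + \<tau> * atomic_norm A (xs + e)
      \<le> \<tau> * atomic_norm A xs + \<gamma> * \<tau> * atomic_norm A e"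
    using prox_basic_ineq[OF assms(1-4)] by (simp add: e_def)
  then have "\<tau> * atomic_norm A (xs + e) \<le> \<tau> * atomic_norm A xs + \<gamma> * \<tau> * atomic_norm A e"
    using zero_le_power2[of "norm e"] by linarith
  then have "\<tau> * atomic_norm A (xs + e) \<le> \<tau> * (atomic_norm A xs + \<gamma> * atomic_norm A e)"
    by (simp add: algebra_simps)
  then have "e \<in> descent_cone \<gamma> xs A"
    using \<open>\<tau> > 0\<close> by (intro mem_descent_cone) simp
  then have lin: "phi \<gamma> xs A * atomic_norm A e \<le> norm e"
    by (rule phi_mult_atomic_norm_le)
  have "atomic_norm A xs \<le> atomic_norm A (xs + e) + atomic_norm A e"
    using atomic_norm_triangle[of "xs + e" "- e"] atomic_norm_minus[OF assms(2), of e] by simp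
  then have "\<tau> * atomic_norm A xs \<le> \<tau> * atomic_norm A (xs + e) + \<tau> * atomic_norm A e"
    using \<open>\<tau> > 0\<close> by (simp add: distrib_left[symmetric])
  moreover have "((1 + \<gamma>) * \<tau>) * atomic_norm A e = \<tau> * atomic_norm A e + \<gamma> * \<tau> * atomic_norm A e"
    by (simp add: algebra_simps)
  ultimately have "(norm e)\<^sup>2 \<le> ((1 + \<gamma>) * \<tau>) * atomic_norm A e"
    using basic by linarith
  moreover have "0 \<le> (1 + \<gamma>) * \<tau>" using \<open>\<gamma> \<ge> 0\<close> \<open>\<tau> > 0\<close> by simp
  ultimately have "(norm e)\<^sup>2 \<le> ((1 + \<gamma>) * \<tau> / phi \<gamma> xs A)\<^sup>2"
    using square_le_of_quadratic_bound lin phi_pos norm_ge_zero by blast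
  then show ?thesis by (simp only: e_def)
qed

end

theorem proposition2:
  fixes A :: "(complex ^ 'n::finite) set"
    and xs :: "complex ^ 'n"
    and M :: "'w measure"
    and w xhat :: "'w \<Rightarrow> complex ^ 'n"
    and \<delta> :: "real \<Rightarrow> real"
    and \<tau> \<gamma> :: real
  assumes centro: "centrosymmetric A"
    and cpt: "compact (convex hull A)"
    and ball: "\<exists>r>0. ball 0 r \<subseteq> convex hull A"
    and P: "prob_space M"
    and w_rv: "w \<in> borel_measurable M"
    and w_int: "integrable M (\<lambda>\<omega>. dual_atomic_norm A (w \<omega>))"
    and tail: "\<And>t. t > 0 \<Longrightarrow>
       measure M {\<omega> \<in> space M. dual_atomic_norm A (w \<omega>)
           \<ge> (\<integral>\<omega>. dual_atomic_norm A (w \<omega>) \<partial>M) + t} < \<delta> t"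
    and tau: "\<tau> > 0"
    and xhat: "\<And>\<omega> x. \<omega> \<in> space M \<Longrightarrow>
       (1/2) * (norm (xhat \<omega> - (xs + w \<omega>)))\<^sup>2 + \<tau> * atomic_norm A (xhat \<omega>)
         \<le> (1/2) * (norm (x - (xs + w \<omega>)))\<^sup>2 + \<tau> * atomic_norm A x"
    and gamma: "0 \<le> \<gamma>" "\<gamma> \<le> 1"
    and gamma_gt: "\<gamma> > (\<integral>\<omega>. dual_atomic_norm A (w \<omega>) \<partial>M) / \<tau>"
    and phi_pos: "phi \<gamma> xs A > 0"
  shows "measure M {\<omega> \<in> space M. (norm (xhat \<omega> - xs))\<^sup>2
            \<le> (1 + \<gamma>)\<^sup>2 * \<tau>\<^sup>2 / (\<gamma>\<^sup>2 * (phi \<gamma> xs A)\<^sup>2)}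
         \<ge> 1 - \<delta> (\<gamma> * \<tau> - (\<integral>\<omega>. dual_atomic_norm A (w \<omega>) \<partial>M))"
proof -
  interpret prob_space M by (rule P)
  interpret absorbing_atoms A by unfold_locales (use ball in \<open>auto simp: mem_interior\<close>)
  have bounded: "bounded A" by (rule bounded_subset[OF compact_imp_bounded[OF cpt] hull_subset])
  define Ex where "Ex = (\<integral>\<omega>. dual_atomic_norm A (w \<omega>) \<partial>M)"
  define B where "B = (1 + \<gamma>)\<^sup>2 * \<tau>\<^sup>2 / (\<gamma>\<^sup>2 * (phi \<gamma> xs A)\<^sup>2)"
  define f where "f x = \<tau> * atomic_norm A x" for x
  have "Ex \<ge> 0" unfolding Ex_def
    by (rule Bochner_Integration.integral_nonneg) (rule dual_atomic_norm_nonneg[OF bounded centro])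
  moreover have "Ex < \<gamma> * \<tau>" using gamma_gt tau unfolding Ex_def[symmetric] by (simp add: pos_divide_less_eq)
  ultimately have "\<gamma> * \<tau> > 0" by linarith
  then have "\<gamma> > 0" using tau by (simp add: zero_less_mult_iff)
  have f: "convex_on UNIV f" "continuous_on UNIV f" "\<And>x. f x \<ge> 0"
    unfolding f_def using tau convex_on_atomic_norm continuous_on_atomic_norm atomic_norm_nonneg
    by (auto intro: convex_on_cmul continuous_on_mult_left)
  have prox: "is_prox f (xs + w \<omega>) (xhat \<omega>)" if "\<omega> \<in> space M" for \<omega>
    using xhat[OF that] unfolding is_prox_def f_def by blast
  \<comment> \<open>the factor \<open>\<gamma>\<^sup>2\<close> in the stated bound is only a weakening, using \<open>\<gamma> \<le> 1\<close>\<close>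
  have "((1 + \<gamma>) * \<tau> / phi \<gamma> xs A)\<^sup>2 \<le> B"
  proof -
    have "\<gamma>\<^sup>2 * (phi \<gamma> xs A)\<^sup>2 \<le> (phi \<gamma> xs A)\<^sup>2"
      using gamma by (intro mult_left_le_one_le) (auto simp: power_le_one)
    then show ?thesis unfolding B_def power_divide power_mult_distrib
      using \<open>\<gamma> > 0\<close> phi_pos by (intro divide_left_mono) auto
  qed
  then have good: "(norm (xhat \<omega> - xs))\<^sup>2 \<le> B"
    if "\<omega> \<in> space M" "dual_atomic_norm A (w \<omega>) < \<gamma> * \<tau>" for \<omega>
    using prox_error_bound[OF bounded centro tau prox[OF that(1), unfolded f_def] _ phi_pos] that
    by fastforce
  have [measurable]: "xhat \<in> borel_measurable M"
  proof (rule measurable_cong[THEN iffD1])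
    show "\<omega> \<in> space M \<Longrightarrow> prox f (xs + w \<omega>) = xhat \<omega>" for \<omega>
      using is_prox_imp_eq_prox[OF f prox] by simp
    have "(\<lambda>\<omega>. xs + w \<omega>) \<in> borel_measurable M" using w_rv by measurable
    from measurable_compose[OF this borel_measurable_continuous_onI[OF continuous_on_prox[OF f]]]
    show "(\<lambda>\<omega>. prox f (xs + w \<omega>)) \<in> borel_measurable M" .
  qed
  have [measurable]: "(\<lambda>\<omega>. dual_atomic_norm A (w \<omega>)) \<in> borel_measurable M" using w_int by auto
  have "1 - prob {\<omega> \<in> space M. dual_atomic_norm A (w \<omega>) \<ge> Ex + (\<gamma> * \<tau> - Ex)}
      \<le> prob {\<omega> \<in> space M. (norm (xhat \<omega> - xs))\<^sup>2 \<le> B}"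
    by (rule prob_ge_one_minus_prob) (measurable, measurable, use good in force)
  with tail[of "\<gamma> * \<tau> - Ex"] \<open>Ex < \<gamma> * \<tau>\<close> show ?thesis unfolding Ex_def B_def by simp
qed

end
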